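(* (a) For every bracket pattern $w$, the set $\mathbb N_0\setminus A(w)$ is a submonoid of $(\mathbb N_0,+)$. (b) For every submonoid $M$ of $(\mathbb N_0,+)$ such that $\mathbb N_0\setminus M$ is finite, $A(\mathbb N_0\setminus M)=\mathbb N_0\setminus M$. In particular, a bracket pattern $w$ satisfies $w=A(w)$ if and only if $w=\mathbb N_0\setminus M$ for some submonoid $M$ of $(\mathbb N_0,+)$.
   Context: $\mathbb N=\{1,2,\dots\}$, $\mathbb N_0=\mathbb N\cup\{0\}$. A bracket pattern is a non-empty finite subset $w\subseteq\mathbb N$. For any finite subset $w\subseteq\mathbb N$ (in particular for bracket patterns), the completion is $A(w):=\{j-i\mid j\in w,\ i\in\mathbb N_0,\ i\notin w,\ i<j\}$ (so $A(\emptyset)=\emptyset$). A submonoid of $(\mathbb N_0,+)$ is a subset containing $0$ and closed under addition. *)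

theory Defs
  imports Main
begin

definition bracket_pattern :: "nat set \<Rightarrow> bool" where
  "bracket_pattern w \<longleftrightarrow> w \<noteq> {} \<and> finite w \<and> 0 \<notin> w"

definition completion :: "nat set \<Rightarrow> nat set" where
  "completion w = {j - i | j i. j \<in> w \<and> i \<notin> w \<and> i < j}"

definition submonoid_nat :: "nat set \<Rightarrow> bool" where
  "submonoid_nat M \<longleftrightarrow> 0 \<in> M \<and> (\<forall>a\<in>M. \<forall>b\<in>M. a + b \<in> M)"

end

theory Submission
  imports Defs
begin

text \<open>Writing \<open>d \<in> A(w)\<close> as "some \<open>i \<notin> w\<close> has \<open>i + d \<in> w\<close>", closure of the complement of
  \<open>A(w)\<close> under addition is a two-step walk: from \<open>i \<notin> w\<close> to \<open>i + a + b \<in> w\<close> we either enter \<open>w\<close>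
  at \<open>i + a\<close>, so \<open>a \<in> A(w)\<close>, or only after it, so \<open>b \<in> A(w)\<close>. Conversely, if \<open>M\<close> is a
  submonoid then \<open>i \<in> M\<close>, \<open>i + d \<notin> M\<close> forces \<open>d \<notin> M\<close>, and every \<open>d \<notin> M\<close> arises from \<open>i = 0\<close>.
  No finiteness is needed for either direction.\<close>

lemma mem_completion_iff: "d \<in> completion w \<longleftrightarrow> (\<exists>i. i \<notin> w \<and> i + d \<in> w)"
proof
  assume "d \<in> completion w"
  then obtain j i where "d = j - i" "j \<in> w" "i \<notin> w" "i < j"
    unfolding completion_def by blast
  then show "\<exists>i. i \<notin> w \<and> i + d \<in> w" by auto
next
  assume "\<exists>i. i \<notin> w \<and> i + d \<in> w"
  then obtain i where "i \<notin> w" "i + d \<in> w" by blast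
  moreover from this have "i < i + d" by (cases "d = 0") auto
  ultimately show "d \<in> completion w"
    unfolding completion_def by force
qed

lemma submonoid_nat_compl_completion: "submonoid_nat (UNIV - completion w)"
  unfolding submonoid_nat_def
proof (intro conjI ballI)
  show "0 \<in> UNIV - completion w" by (simp add: mem_completion_iff)
next
  fix a b assume a: "a \<in> UNIV - completion w" and b: "b \<in> UNIV - completion w"
  show "a + b \<in> UNIV - completion w"
  proof (rule ccontr)
    assume "a + b \<notin> UNIV - completion w"
    then obtain i where i: "i \<notin> w" "i + (a + b) \<in> w"
      by (auto simp: mem_completion_iff)
    show False
    proof (cases "i + a \<in> w")
      case True
      with i(1) have "a \<in> completion w" by (auto simp: mem_completion_iff)
      with a show False by simp
    next
      case False
      with i(2) have "b \<in> completion w"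
        by (auto simp: mem_completion_iff add.assoc intro!: exI[of _ "i + a"])
      with b show False by simp
    qed
  qed
qed

lemma completion_compl_submonoid_nat:
  assumes "submonoid_nat M"
  shows "completion (UNIV - M) = UNIV - M"
proof -
  from assms have zero: "0 \<in> M" and add: "\<And>a b. a \<in> M \<Longrightarrow> b \<in> M \<Longrightarrow> a + b \<in> M"
    unfolding submonoid_nat_def by blast+
  have "d \<in> completion (UNIV - M) \<longleftrightarrow> d \<notin> M" for d
  proof
    assume "d \<in> completion (UNIV - M)"
    then obtain i where "i \<in> M" "i + d \<notin> M" by (auto simp: mem_completion_iff)
    with add show "d \<notin> M" by blast
  next
    assume "d \<notin> M"
    with zero show "d \<in> completion (UNIV - M)"
      by (auto simp: mem_completion_iff intro!: exI[of _ 0])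
  qed
  then show ?thesis by blast
qed

lemma completion_fixed_iff_submonoid_nat_compl:
  "completion w = w \<longleftrightarrow> submonoid_nat (UNIV - w)"
proof
  assume "completion w = w"
  then show "submonoid_nat (UNIV - w)"
    using submonoid_nat_compl_completion[of w] by simp
next
  assume "submonoid_nat (UNIV - w)"
  then show "completion w = w"
    using completion_compl_submonoid_nat[of "UNIV - w"] by (simp add: Diff_Diff_Int)
qed

theorem lemma7p13:
  shows "(\<forall>w. bracket_pattern w \<longrightarrow> submonoid_nat (UNIV - completion w))
    \<and> (\<forall>M. submonoid_nat M \<and> finite (UNIV - M) \<longrightarrow> completion (UNIV - M) = UNIV - M)
    \<and> (\<forall>w. bracket_pattern w \<longrightarrow>
          (w = completion w \<longleftrightarrow> (\<exists>M. submonoid_nat M \<and> w = UNIV - M)))"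
proof -
  have "w = completion w \<longleftrightarrow> (\<exists>M. submonoid_nat M \<and> w = UNIV - M)" for w :: "nat set"
  proof -
    have "(\<exists>M. submonoid_nat M \<and> w = UNIV - M) \<longleftrightarrow> submonoid_nat (UNIV - w)"
      by (auto simp: Diff_Diff_Int)
    then show ?thesis
      using completion_fixed_iff_submonoid_nat_compl[of w] by auto
  qed
  then show ?thesis
    by (simp add: submonoid_nat_compl_completion completion_compl_submonoid_nat)
qed

end
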